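(* Let $T:l_\infty\to l_\infty$ be a continuous positive linear map with adjoint $T^*$. Suppose (i) for every sequence $(A_n)$ of subsets of $\mathbb N$ with $(A_n)\downarrow\emptyset$, $T(\mathbb I_{A_n})$ converges to $0$ coordinatewise; and (ii) for every $n\in\mathbb N$ there is a finite set $E_n\subseteq\mathbb N$ containing the support of $T(\mathbb I_{\{n\}})$. Then $T^*$ is a Yosida–Hewitt transformation, i.e. $T^*(\mu)\in ca(\mathbb N)$ for every $\mu\in ca(\mathbb N)$ and $T^*(\mu)\in pa(\mathbb N)$ for every $\mu\in pa(\mathbb N)$.
   Context: $l_\infty$: real bounded sequences indexed by $\mathbb N$. $\mathbb I_A$ is the indicator sequence of $A\subseteq\mathbb N$. $(A_n)\downarrow\emptyset$ means $A_n\supseteq A_{n+1}$ and $\bigcap_nA_n=\emptyset$. $ba(\mathbb N)$: norm dual of $l_\infty$ (bounded finitely additive signed measures on $2^{\mathbb N}$), pairing $\langle x,\mu\rangle$. The adjoint $T^*$ satisfies $\langle x,T^*(\mu)\rangle=\langle T(x),\mu\rangle$. $ca(\mathbb N)$ is the set of countably additive elements of $ba(\mathbb N)$; $pa(\mathbb N)$ is the set of purely finitely additive elements, i.e. $\mu$ with $\mu(\{n\})=0$ for every $n\in\mathbb N$. *)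

theory Defs
  imports "HOL-Analysis.Analysis"
begin

(* l_infinity = nat =>C real (bounded functions on discrete nat, sup norm).
   ba(N) = its norm dual (linf =>L real); a functional mu corresponds to the
   finitely additive set function A |-> <I_A, mu>. *)


type_synonym linf = "nat \<Rightarrow>\<^sub>C real"
type_synonym ba = "linf \<Rightarrow>\<^sub>L real"

definition ind :: "nat set \<Rightarrow> linf" where
  "ind A = Bcontfun (indicator A)"

definition ba_measure :: "ba \<Rightarrow> nat set \<Rightarrow> real" where
  "ba_measure \<mu> A = blinfun_apply \<mu> (ind A)"

definition positive_op :: "(linf \<Rightarrow>\<^sub>L linf) \<Rightarrow> bool" where
  "positive_op T \<longleftrightarrow> (\<forall>x. (\<forall>n. apply_bcontfun x n \<ge> 0) \<longrightarrow>
      (\<forall>n. apply_bcontfun (blinfun_apply T x) n \<ge> 0))"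

definition adjoint_op :: "(linf \<Rightarrow>\<^sub>L linf) \<Rightarrow> ba \<Rightarrow> ba" where
  "adjoint_op T \<mu> = \<mu> o\<^sub>L T"

definition is_ca :: "ba \<Rightarrow> bool" where
  "is_ca \<mu> \<longleftrightarrow> (\<forall>A::nat \<Rightarrow> nat set. disjoint_family A \<longrightarrow>
      (\<lambda>n. ba_measure \<mu> (A n)) sums ba_measure \<mu> (\<Union>n. A n))"

definition is_pa :: "ba \<Rightarrow> bool" where
  "is_pa \<mu> \<longleftrightarrow> (\<forall>n. ba_measure \<mu> {n} = 0)"

definition yosida_hewitt :: "(ba \<Rightarrow> ba) \<Rightarrow> bool" where
  "yosida_hewitt S \<longleftrightarrow> (\<forall>\<mu>. is_ca \<mu> \<longrightarrow> is_ca (S \<mu>)) \<and> (\<forall>\<mu>. is_pa \<mu> \<longrightarrow> is_pa (S \<mu>))"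

end

theory Submission
  imports Defs
begin

text \<open>A countably additive \<open>\<mu>\<close> acts on \<open>l\<^sub>\<infinity>\<close> as pairing with the summable sequence of
its point masses: both sides are continuous and agree on indicators, whose span is dense.
Countable additivity of \<open>T\<^sup>* \<mu>\<close> amounts to continuity at \<open>{}\<close>. For \<open>C\<^sub>N\<close> decreasing to \<open>{}\<close>,
hypothesis (i) makes \<open>T (ind C\<^sub>N)\<close> tend to \<open>0\<close> pointwise, with sup norms bounded by \<open>norm T\<close>,
so \<open>\<mu> (T (ind C\<^sub>N)) \<longlonglongrightarrow> 0\<close> by dominated convergence (Tannery's theorem).
By (ii), \<open>T (ind {n})\<close> is a finite combination of point indicators, on which a purely
finitely additive \<open>\<mu>\<close> vanishes.\<close>

lemma bcontfun_indicator: "(indicator A :: nat \<Rightarrow> real) \<in> bcontfun"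
  by (rule bcontfun_normI) (auto simp: continuous_on_discrete indicator_def)

lemma apply_ind [simp]: "apply_bcontfun (ind A) n = indicator A n"
  unfolding ind_def using bcontfun_indicator by (simp add: Bcontfun_inverse)

lemma ind_empty [simp]: "ind {} = 0"
  by (rule bcontfun_eqI) simp

lemma norm_ind_le_one: "norm (ind A) \<le> 1"
  by (rule norm_bound) (auto simp: indicator_def)

lemma apply_bcontfun_sum: "apply_bcontfun (sum f S) x = (\<Sum>i\<in>S. apply_bcontfun (f i) x)"
  by (induction S rule: infinite_finite_induct) auto

lemma ind_UN_disjoint:
  fixes A :: "nat \<Rightarrow> nat set"
  assumes "disjoint_family A"
  shows "ind (\<Union>n<N. A n) = (\<Sum>n<N. ind (A n))"
proof (rule bcontfun_eqI)
  fix x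
  have "indicator (\<Union>n<N. A n) x = (\<Sum>n<N. indicator (A n) x :: real)"
    using assms by (intro indicator_UN_disjoint) (auto simp: disjoint_family_on_def)
  then show "apply_bcontfun (ind (\<Union>n<N. A n)) x = apply_bcontfun (\<Sum>n<N. ind (A n)) x"
    by (simp add: apply_bcontfun_sum)
qed

lemma ba_measure_UN_disjoint:
  fixes A :: "nat \<Rightarrow> nat set"
  assumes "disjoint_family A"
  shows "ba_measure \<nu> (\<Union>n<N. A n) = (\<Sum>n<N. ba_measure \<nu> (A n))"
  by (simp add: ba_measure_def ind_UN_disjoint[OF assms] blinfun.sum_right)

lemma ba_measure_Un_disjoint:
  assumes "A \<inter> B = {}"
  shows "ba_measure \<nu> (A \<union> B) = ba_measure \<nu> A + ba_measure \<nu> B"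
proof -
  have "ind (A \<union> B) = ind A + ind B"
    using assms by (intro bcontfun_eqI) (auto simp: indicator_def)
  then show ?thesis by (simp add: ba_measure_def blinfun.add_right)
qed

lemma is_ca_if_tendsto_zero_on_decseq:
  assumes cont: "\<And>C. decseq C \<Longrightarrow> (\<Inter>N. C N) = {} \<Longrightarrow> (\<lambda>N. ba_measure \<nu> (C N)) \<longlonglongrightarrow> 0"
  shows "is_ca \<nu>"
  unfolding is_ca_def
proof (intro allI impI)
  fix A :: "nat \<Rightarrow> nat set"
  assume disj: "disjoint_family A"
  define C where "C N = (\<Union>n. A n) - (\<Union>n<N. A n)" for N
  have "decseq C"
    unfolding decseq_def C_def by auto
  moreover have "(\<Inter>N. C N) = {}"
    unfolding C_def by (auto dest: spec[of _ "Suc _"])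
  ultimately have tail: "(\<lambda>N. ba_measure \<nu> (C N)) \<longlonglongrightarrow> 0"
    by (rule cont)
  have "ba_measure \<nu> (\<Union>n. A n) = (\<Sum>n<N. ba_measure \<nu> (A n)) + ba_measure \<nu> (C N)" for N
  proof -
    have "(\<Union>n. A n) = (\<Union>n<N. A n) \<union> C N" "(\<Union>n<N. A n) \<inter> C N = {}"
      unfolding C_def by auto
    then show ?thesis
      by (simp add: ba_measure_Un_disjoint ba_measure_UN_disjoint[OF disj])
  qed
  then have "(\<lambda>N. \<Sum>n<N. ba_measure \<nu> (A n)) = (\<lambda>N. ba_measure \<nu> (\<Union>n. A n) - ba_measure \<nu> (C N))"
    by (simp add: fun_eq_iff eq_diff_eq)
  with tail show "(\<lambda>n. ba_measure \<nu> (A n)) sums ba_measure \<nu> (\<Union>n. A n)"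
    unfolding sums_def using tendsto_diff[OF tendsto_const tail] by simp
qed

lemma summable_l1_pairing:
  fixes c :: "nat \<Rightarrow> real" and y :: linf
  assumes "summable (\<lambda>n. \<bar>c n\<bar>)"
  shows "summable (\<lambda>n. \<bar>c n * apply_bcontfun y n\<bar>)"
proof (rule summable_comparison_test)
  show "\<exists>N. \<forall>n\<ge>N. norm \<bar>c n * apply_bcontfun y n\<bar> \<le> \<bar>c n\<bar> * norm y"
    using norm_bounded[of y] by (auto simp: abs_mult intro!: mult_left_mono)
  show "summable (\<lambda>n. \<bar>c n\<bar> * norm y)"
    using assms by (rule summable_mult2)
qed

lemma bounded_linear_l1_pairing:
  fixes c :: "nat \<Rightarrow> real"
  assumes c: "summable (\<lambda>n. \<bar>c n\<bar>)"
  shows "bounded_linear (\<lambda>y :: linf. \<Sum>n. c n * apply_bcontfun y n)"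
proof (rule bounded_linear_intro)
  have sy: "summable (\<lambda>n. c n * apply_bcontfun y n)" for y
    using summable_l1_pairing[OF c] by (rule summable_rabs_cancel)
  show "(\<Sum>n. c n * apply_bcontfun (x + y) n) = (\<Sum>n. c n * apply_bcontfun x n) + (\<Sum>n. c n * apply_bcontfun y n)" for x y
    using suminf_add[OF sy sy] by (simp add: distrib_left)
  show "(\<Sum>n. c n * apply_bcontfun (r *\<^sub>R x) n) = r *\<^sub>R (\<Sum>n. c n * apply_bcontfun x n)" for r x
    using suminf_mult[OF sy, of r] by (simp add: mult.left_commute)
  show "norm (\<Sum>n. c n * apply_bcontfun y n) \<le> norm y * (\<Sum>n. \<bar>c n\<bar>)" for y
  proof -
    have "norm (\<Sum>n. c n * apply_bcontfun y n) \<le> (\<Sum>n. \<bar>c n * apply_bcontfun y n\<bar>)"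
      using summable_l1_pairing[OF c] by (simp add: summable_rabs)
    also have "\<dots> \<le> (\<Sum>n. \<bar>c n\<bar> * norm y)"
      using summable_l1_pairing[OF c] summable_mult2[OF c] norm_bounded[of y]
      by (intro suminf_le) (auto simp: abs_mult intro!: mult_left_mono)
    also have "\<dots> = norm y * (\<Sum>n. \<bar>c n\<bar>)"
      using suminf_mult2[OF c, of "norm y"] by (simp only: mult.commute)
    finally show ?thesis .
  qed
qed

lemma l1_pairing_tendsto_zero:
  fixes c :: "nat \<Rightarrow> real" and y :: "nat \<Rightarrow> linf"
  assumes c: "summable (\<lambda>n. \<bar>c n\<bar>)"
    and lim: "\<And>k. (\<lambda>N. apply_bcontfun (y N) k) \<longlonglongrightarrow> 0"
    and bound: "\<And>N k. \<bar>apply_bcontfun (y N) k\<bar> \<le> B"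
  shows "(\<lambda>N. \<Sum>k. c k * apply_bcontfun (y N) k) \<longlonglongrightarrow> 0"
proof -
  have "(\<lambda>N. \<Sum>k. c k * apply_bcontfun (y N) k) \<longlonglongrightarrow> (\<Sum>k. 0 :: real)"
  proof (rule tannerys_theorem[where M = "\<lambda>k. \<bar>c k\<bar> * B", THEN conjunct2, THEN conjunct2])
    show "(\<lambda>N. c k * apply_bcontfun (y N) k) \<longlonglongrightarrow> 0" for k
      using lim by (rule tendsto_mult_right_zero)
    show "\<forall>\<^sub>F (k, N) in at_top \<times>\<^sub>F sequentially. norm (c k * apply_bcontfun (y N) k) \<le> \<bar>c k\<bar> * B"
      by (rule always_eventually) (auto simp: abs_mult intro!: mult_left_mono bound)
    show "summable (\<lambda>k. \<bar>c k\<bar> * B)"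
      using c by (rule summable_mult2)
  qed simp
  then show ?thesis by simp
qed

lemma ca_point_masses_sums:
  assumes "is_ca \<mu>"
  shows "(\<lambda>n. ba_measure \<mu> {n} * indicator A n) sums ba_measure \<mu> A"
proof -
  have "disjoint_family (\<lambda>n. A \<inter> {n})"
    by (auto simp: disjoint_family_on_def)
  then have "(\<lambda>n. ba_measure \<mu> (A \<inter> {n})) sums ba_measure \<mu> (\<Union>n. A \<inter> {n})"
    using assms unfolding is_ca_def by blast
  moreover have "(\<Union>n. A \<inter> {n}) = A"
    by auto
  moreover have "ba_measure \<mu> (A \<inter> {n}) = ba_measure \<mu> {n} * indicator A n" for n
    by (cases "n \<in> A") (auto simp: ba_measure_def)
  ultimately show ?thesis
    by simp
qed

lemma ca_summable_abs_point_masses: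
  assumes "is_ca \<mu>"
  shows "summable (\<lambda>n. \<bar>ba_measure \<mu> {n}\<bar>)"
proof -
  define P where "P = {n. ba_measure \<mu> {n} \<ge> 0}"
  have "summable (\<lambda>n. ba_measure \<mu> {n} * indicator P n - ba_measure \<mu> {n} * indicator (-P) n)"
    using ca_point_masses_sums[OF assms] by (intro summable_diff) (auto intro: sums_summable)
  also have "(\<lambda>n. ba_measure \<mu> {n} * indicator P n - ba_measure \<mu> {n} * indicator (-P) n) =
      (\<lambda>n. \<bar>ba_measure \<mu> {n}\<bar>)"
    by (auto simp: P_def indicator_def)
  finally show ?thesis .
qed

lemma bcontfun_in_closure_span_ind: "x \<in> closure (span (range ind))"
  unfolding closure_approachable_le
proof (intro allI impI)
  fix \<epsilon> :: real
  assume "\<epsilon> > 0"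
  define j where "j n = \<lfloor>apply_bcontfun x n / \<epsilon>\<rfloor>" for n
  have "- norm x / \<epsilon> \<le> apply_bcontfun x n / \<epsilon> \<and> apply_bcontfun x n / \<epsilon> \<le> norm x / \<epsilon>" for n
    using norm_bounded[of x n] \<open>\<epsilon> > 0\<close> by (auto simp: abs_le_iff field_simps)
  then have "range j \<subseteq> {\<lfloor>- norm x / \<epsilon>\<rfloor>..\<lfloor>norm x / \<epsilon>\<rfloor>}"
    by (auto simp: j_def intro!: floor_mono)
  then have fin: "finite (range j)"
    by (rule finite_subset) simp
  define s where "s = (\<Sum>i\<in>range j. (\<epsilon> * of_int i) *\<^sub>R ind {n. j n = i})"
  have s: "apply_bcontfun s n = \<epsilon> * of_int (j n)" for n
  proof -
    have "apply_bcontfun s n = (\<Sum>i\<in>range j. if i = j n then \<epsilon> * of_int i else 0)"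
      unfolding s_def apply_bcontfun_sum by (intro sum.cong) (auto simp: indicator_def)
    then show ?thesis
      using fin by simp
  qed
  have "s \<in> span (range ind)"
    unfolding s_def by (intro span_sum span_scale span_base) simp
  moreover have "dist s x \<le> \<epsilon>"
    unfolding dist_norm
  proof (rule norm_bound)
    fix n
    have "of_int (j n) \<le> apply_bcontfun x n / \<epsilon>" "apply_bcontfun x n / \<epsilon> < of_int (j n) + 1"
      unfolding j_def by linarith+
    then have "\<epsilon> * of_int (j n) \<le> apply_bcontfun x n" "apply_bcontfun x n < \<epsilon> * of_int (j n) + \<epsilon>"
      using \<open>\<epsilon> > 0\<close> by (simp_all add: field_simps)
    then show "norm (apply_bcontfun (s - x) n) \<le> \<epsilon>"
      by (simp add: s)
  qed
  ultimately show "\<exists>s\<in>span (range ind). dist s x \<le> \<epsilon>"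
    by blast
qed

lemma ca_eq_l1_pairing:
  assumes ca: "is_ca \<mu>"
  shows "blinfun_apply \<mu> x = (\<Sum>n. ba_measure \<mu> {n} * apply_bcontfun x n)"
proof -
  define L where "L y = (\<Sum>n. ba_measure \<mu> {n} * apply_bcontfun y n)" for y
  have L: "bounded_linear L"
    unfolding L_def using ca_summable_abs_point_masses[OF ca] by (rule bounded_linear_l1_pairing)
  have "span (range ind) \<subseteq> {y. blinfun_apply \<mu> y = L y}"
  proof
    fix y
    assume "y \<in> span (range ind)"
    moreover have "blinfun_apply \<mu> (ind A) = L (ind A)" for A
      using ca_point_masses_sums[OF ca, of A] unfolding L_def ba_measure_def
      by (simp add: sums_iff)
    ultimately show "y \<in> {y. blinfun_apply \<mu> y = L y}"
      using linear_eq_on_span[of "blinfun_apply \<mu>" L "range ind" y]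
        bounded_linear.linear[OF blinfun.bounded_linear_right] bounded_linear.linear[OF L]
      by auto
  qed
  moreover have "closed {y. blinfun_apply \<mu> y = L y}"
    using L by (intro closed_Collect_eq linear_continuous_on blinfun.bounded_linear_right)
  ultimately have "closure (span (range ind)) \<subseteq> {y. blinfun_apply \<mu> y = L y}"
    by (rule closure_minimal)
  with bcontfun_in_closure_span_ind show ?thesis
    unfolding L_def by blast
qed

lemma bcontfun_eq_sum_singletons:
  assumes "finite E" "{k. apply_bcontfun y k \<noteq> 0} \<subseteq> E"
  shows "y = (\<Sum>k\<in>E. apply_bcontfun y k *\<^sub>R ind {k})"
proof (rule bcontfun_eqI)
  fix j
  have "(\<Sum>k\<in>E. apply_bcontfun y k * indicator {k} j) = (\<Sum>k\<in>E. if k = j then apply_bcontfun y k else 0)"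
    by (intro sum.cong) (auto simp: indicator_def)
  then show "apply_bcontfun y j = apply_bcontfun (\<Sum>k\<in>E. apply_bcontfun y k *\<^sub>R ind {k}) j"
    using assms by (auto simp: apply_bcontfun_sum)
qed

lemma pa_vanishes_on_finite_support:
  assumes "is_pa \<mu>" "finite E" "{k. apply_bcontfun y k \<noteq> 0} \<subseteq> E"
  shows "blinfun_apply \<mu> y = 0"
proof -
  have "blinfun_apply \<mu> y = (\<Sum>k\<in>E. apply_bcontfun y k * ba_measure \<mu> {k})"
    by (subst bcontfun_eq_sum_singletons[OF assms(2,3)])
      (simp add: blinfun.sum_right blinfun.scaleR_right ba_measure_def)
  also have "\<dots> = 0"
    using assms(1) by (simp add: is_pa_def)
  finally show ?thesis .
qed

lemma ba_measure_adjoint_op: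
  "ba_measure (adjoint_op T \<mu>) A = blinfun_apply \<mu> (blinfun_apply T (ind A))"
  by (simp add: ba_measure_def adjoint_op_def)

lemma abs_apply_blinfun_ind_le_norm:
  "\<bar>apply_bcontfun (blinfun_apply T (ind A)) k\<bar> \<le> norm T"
proof -
  have "\<bar>apply_bcontfun (blinfun_apply T (ind A)) k\<bar> \<le> norm (blinfun_apply T (ind A))"
    using norm_bounded[of "blinfun_apply T (ind A)" k] by simp
  also have "\<dots> \<le> norm T * norm (ind A)"
    by (rule norm_blinfun)
  also have "\<dots> \<le> norm T"
    using norm_ind_le_one[of A] mult_left_le[of "norm (ind A)" "norm T"] by simp
  finally show ?thesis .
qed

theorem lemma3:
  fixes T :: "linf \<Rightarrow>\<^sub>L linf"
  assumes pos: "positive_op T"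
    and i: "\<And>A :: nat \<Rightarrow> nat set. decseq A \<Longrightarrow> (\<Inter>n. A n) = {} \<Longrightarrow>
             (\<forall>k. (\<lambda>n. apply_bcontfun (blinfun_apply T (ind (A n))) k) \<longlonglongrightarrow> 0)"
    and ii: "\<And>n. \<exists>E. finite E \<and> {k. apply_bcontfun (blinfun_apply T (ind {n})) k \<noteq> 0} \<subseteq> E"
  shows "yosida_hewitt (adjoint_op T)"
  unfolding yosida_hewitt_def
proof (intro conjI allI impI)
  fix \<mu>
  assume ca: "is_ca \<mu>"
  show "is_ca (adjoint_op T \<mu>)"
  proof (rule is_ca_if_tendsto_zero_on_decseq)
    fix C :: "nat \<Rightarrow> nat set"
    assume "decseq C" "(\<Inter>N. C N) = {}"
    then have "\<And>k. (\<lambda>N. apply_bcontfun (blinfun_apply T (ind (C N))) k) \<longlonglongrightarrow> 0"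
      using i by blast
    then have "(\<lambda>N. \<Sum>k. ba_measure \<mu> {k} * apply_bcontfun (blinfun_apply T (ind (C N))) k) \<longlonglongrightarrow> 0"
      using ca_summable_abs_point_masses[OF ca] abs_apply_blinfun_ind_le_norm
      by (intro l1_pairing_tendsto_zero)
    then show "(\<lambda>N. ba_measure (adjoint_op T \<mu>) (C N)) \<longlonglongrightarrow> 0"
      by (simp add: ba_measure_adjoint_op ca_eq_l1_pairing[OF ca])
  qed
next
  fix \<mu>
  assume "is_pa \<mu>"
  then show "is_pa (adjoint_op T \<mu>)"
    unfolding is_pa_def ba_measure_adjoint_op
    using ii pa_vanishes_on_finite_support[OF \<open>is_pa \<mu>\<close>] by blast
qed

end
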